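(* Let $R$ be an integral domain. If $R/(u)$ is a coherent ring for every nonzero nonunit $u\in R$, then $R$ is coherent.
   Context: A commutative ring is coherent if every finitely generated ideal is finitely presented. *)

theory Defs
  imports "HOL-Algebra.QuotRing"
begin

definition syzygy :: "('a, 'b) ring_scheme \<Rightarrow> nat \<Rightarrow> (nat \<Rightarrow> 'a) \<Rightarrow> (nat \<Rightarrow> 'a) \<Rightarrow> bool" where
  "syzygy R n a r \<longleftrightarrow>
     (\<forall>i<n. r i \<in> carrier R) \<and> (\<forall>i\<ge>n. r i = \<zero>\<^bsub>R\<^esub>) \<and>
     (\<Oplus>\<^bsub>R\<^esub>i\<in>{..<n}. r i \<otimes>\<^bsub>R\<^esub> a i) = \<zero>\<^bsub>R\<^esub>"

text \<open>An ideal I is finitely presented: there is a surjection R^n \<rightarrow> I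
  (given by generators a 0..a (n-1)) whose kernel (the syzygy module) is
  finitely generated, i.e. there is an exact sequence R^m \<rightarrow> R^n \<rightarrow> I \<rightarrow> 0.\<close>
definition finitely_presented_ideal :: "('a, 'b) ring_scheme \<Rightarrow> 'a set \<Rightarrow> bool" where
  "finitely_presented_ideal R I \<longleftrightarrow>
     (\<exists>(n::nat) a. (\<forall>i<n. a i \<in> carrier R) \<and> I = Idl\<^bsub>R\<^esub> (a ` {..<n}) \<and>
        (\<exists>(m::nat) s. (\<forall>j<m. syzygy R n a (s j)) \<and>
           (\<forall>r. syzygy R n a r \<longrightarrow>
              (\<exists>c. (\<forall>j<m. c j \<in> carrier R) \<and>
                   (\<forall>i<n. r i = (\<Oplus>\<^bsub>R\<^esub>j\<in>{..<m}. c j \<otimes>\<^bsub>R\<^esub> s j i))))))"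

definition finitely_generated_ideal :: "('a, 'b) ring_scheme \<Rightarrow> 'a set \<Rightarrow> bool" where
  "finitely_generated_ideal R I \<longleftrightarrow>
     (\<exists>S. finite S \<and> S \<subseteq> carrier R \<and> I = Idl\<^bsub>R\<^esub> S)"

definition coherent_ring :: "('a, 'b) ring_scheme \<Rightarrow> bool" where
  "coherent_ring R \<longleftrightarrow> cring R \<and>
     (\<forall>I. ideal I R \<and> finitely_generated_ideal R I \<longrightarrow> finitely_presented_ideal R I)"

end

theory Submission
  imports Defs
begin

text \<open>
  Let I be generated by a_1, ..., a_n. The cases I = 0 and I = R are trivial, so pick a nonzero
  nonunit u in I; then I = (u, a_1, ..., a_n). Finite presentation of an ideal does not depend on
  the chosen finite generating family, so coherence of R/(u) yields finitely many syzygies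
  s_1, ..., s_m generating all syzygies of the images of the a_i in R/(u). Lifting s_j to R gives
  S_j with sum_i S_ji a_i = t_j u, hence the syzygy (-t_j, S_j) of (u, a). Together with the Koszul
  relations (-a_k, u e_k) these generate all syzygies of (u, a): the tail of a syzygy reduces
  modulo u to a combination of the s_j, which fixes the tail up to multiples of u e_k, and since
  u is a nonzerodivisor the head coordinate is then determined by the tail.
\<close>

definition append_seq :: "nat \<Rightarrow> (nat \<Rightarrow> 'b) \<Rightarrow> (nat \<Rightarrow> 'b) \<Rightarrow> nat \<Rightarrow> 'b" where
  "append_seq m f g j = (if j < m then f j else g (j - m))"

context abelian_monoid
begin

lemma finsum_lessThan_cong:
  fixes n :: nat
  assumes "\<And>i. i < n \<Longrightarrow> f i = g i" "\<And>i. i < n \<Longrightarrow> g i \<in> carrier G"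
  shows "(\<Oplus>i\<in>{..<n}. f i) = (\<Oplus>i\<in>{..<n}. g i)"
  using assms by (intro finsum_cong) (auto simp: Pi_def)

lemma finsum_lessThan_Suc_shift:
  assumes "\<And>i. i < Suc n \<Longrightarrow> f i \<in> carrier G"
  shows "(\<Oplus>i\<in>{..<Suc n}. f i) = f 0 \<oplus> (\<Oplus>i\<in>{..<n}. f (Suc i))"
proof -
  have "(\<Oplus>i\<in>{..<Suc n}. f i) = f 0 \<oplus> (\<Oplus>i\<in>Suc ` {..<n}. f i)"
    unfolding lessThan_Suc_eq_insert_0 using assms by (intro finsum_insert) auto
  also have "(\<Oplus>i\<in>Suc ` {..<n}. f i) = (\<Oplus>i\<in>{..<n}. f (Suc i))"
    using assms by (intro finsum_reindex) auto
  finally show ?thesis .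
qed

lemma finsum_lessThan_add:
  fixes m n :: nat
  assumes "\<And>i. i < m + n \<Longrightarrow> f i \<in> carrier G"
  shows "(\<Oplus>i\<in>{..<m + n}. f i) = (\<Oplus>i\<in>{..<m}. f i) \<oplus> (\<Oplus>i\<in>{..<n}. f (m + i))"
proof -
  have "(+) m ` {..<n} = {m..<m + n}"
    by (simp add: lessThan_atLeast0 image_add_atLeastLessThan add.commute)
  then have "(\<Oplus>i\<in>{..<m + n}. f i) = (\<Oplus>i\<in>{..<m}. f i) \<oplus> (\<Oplus>i\<in>(+) m ` {..<n}. f i)"
    using assms by (subst finsum_Un_disjoint[symmetric]) (auto simp: ivl_disj_un)
  also have "(\<Oplus>i\<in>(+) m ` {..<n}. f i) = (\<Oplus>i\<in>{..<n}. f (m + i))"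
    using assms by (intro finsum_reindex) auto
  finally show ?thesis .
qed

lemma finsum_lessThan_swap:
  fixes n m :: nat
  assumes "\<And>i k. i < n \<Longrightarrow> k < m \<Longrightarrow> f i k \<in> carrier G"
  shows "(\<Oplus>i\<in>{..<n}. \<Oplus>k\<in>{..<m}. f i k) = (\<Oplus>k\<in>{..<m}. \<Oplus>i\<in>{..<n}. f i k)"
  using assms
proof (induction n)
  case (Suc n)
  have "(\<Oplus>i\<in>{..<Suc n}. \<Oplus>k\<in>{..<m}. f i k)
      = (\<Oplus>k\<in>{..<m}. f n k) \<oplus> (\<Oplus>k\<in>{..<m}. \<Oplus>i\<in>{..<n}. f i k)"
    using Suc by (simp add: lessThan_Suc finsum_insert finsum_closed Pi_def)
  also have "\<dots> = (\<Oplus>k\<in>{..<m}. f n k \<oplus> (\<Oplus>i\<in>{..<n}. f i k))"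
    using Suc.prems by (simp add: finsum_addf finsum_closed Pi_def)
  also have "\<dots> = (\<Oplus>k\<in>{..<m}. \<Oplus>i\<in>{..<Suc n}. f i k)"
    using Suc.prems by (intro finsum_lessThan_cong) (auto simp: lessThan_Suc finsum_insert finsum_closed Pi_def)
  finally show ?case .
qed (simp add: finsum_zero)

end

context ring
begin

lemma ideal_with_unit_eq_carrier:
  assumes "ideal I R" "x \<in> I" "x \<in> Units R"
  shows "I = carrier R"
  using assms ideal.I_r_closed[OF assms(1,2) Units_inv_closed[OF assms(3)]]
  by (simp add: ideal.one_imp_carrier)

lemma genideal_insert_mem:
  assumes "S \<subseteq> carrier R" "x \<in> Idl S"
  shows "Idl (insert x S) = Idl S"
proof
  show "Idl (insert x S) \<subseteq> Idl S"
    using assms genideal_self[OF assms(1)] by (intro genideal_minimal genideal_ideal) auto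
  have "x \<in> carrier R"
    using assms by (auto intro: ideal.Icarr[OF genideal_ideal])
  then show "Idl S \<subseteq> Idl (insert x S)"
    using assms by (intro subset_Idl_subset) auto
qed

lemma finitely_generated_ideal_lessThan:
  assumes "finitely_generated_ideal R I"
  obtains n :: nat and a where "\<forall>i<n. a i \<in> carrier R" "I = Idl (a ` {..<n})"
proof -
  obtain S where S: "finite S" "S \<subseteq> carrier R" "I = Idl S"
    using assms unfolding finitely_generated_ideal_def by blast
  obtain n :: nat and a where "S = a ` {i. i < n}"
    using finite_imp_nat_seg_image_inj_on[OF S(1)] by blast
  then show ?thesis
    using S by (intro that[of n a]) (auto simp: lessThan_def)
qed

lemma quot_carrier_imp_rcos:
  assumes "ideal I R" "X \<in> carrier (R Quot I)"
  shows "\<exists>x\<in>carrier R. X = I +> x"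
  using assms by (auto simp: FactRing_def A_RCOSETS_def')

lemma rcos_eq_iff_diff_mem:
  assumes "ideal I R" "x \<in> carrier R" "y \<in> carrier R"
  shows "I +> x = I +> y \<longleftrightarrow> x \<ominus> y \<in> I"
proof -
  interpret ideal I R by fact
  have "I +> x = I +> y \<longleftrightarrow> x \<in> I +> y"
    using assms a_repr_independence'[of x y] a_repr_independenceD[of x y] by auto
  also have "\<dots> \<longleftrightarrow> x \<ominus> y \<in> I"
    using assms by (intro a_rcos_module_minus ring_axioms)
  finally show ?thesis .
qed

end

context cring
begin

text \<open>
  Vectors are functions on nat and matrices are indexed row first; only the entries below the
  stated lengths matter. \<open>vec_mat n x M\<close> is the row vector x of length n times the matrix M.
\<close>

definition lin_comb :: "nat \<Rightarrow> (nat \<Rightarrow> 'a) \<Rightarrow> (nat \<Rightarrow> 'a) \<Rightarrow> 'a" where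
  "lin_comb n x a = (\<Oplus>i\<in>{..<n}. x i \<otimes> a i)"

definition vec_mat :: "nat \<Rightarrow> (nat \<Rightarrow> 'a) \<Rightarrow> (nat \<Rightarrow> nat \<Rightarrow> 'a) \<Rightarrow> nat \<Rightarrow> 'a" where
  "vec_mat n x M k = lin_comb n x (\<lambda>i. M i k)"

lemma lin_comb_closed:
  assumes "\<forall>i<n. x i \<in> carrier R" "\<forall>i<n. a i \<in> carrier R"
  shows "lin_comb n x a \<in> carrier R"
  using assms unfolding lin_comb_def by (intro finsum_closed) auto

lemma lin_comb_cong:
  assumes "\<forall>i<n. x i = y i" "\<forall>i<n. a i = b i" "\<forall>i<n. y i \<in> carrier R" "\<forall>i<n. b i \<in> carrier R"
  shows "lin_comb n x a = lin_comb n y b"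
  using assms unfolding lin_comb_def by (intro finsum_lessThan_cong) auto

lemma lin_comb_comm:
  assumes "\<forall>i<n. x i \<in> carrier R" "\<forall>i<n. a i \<in> carrier R"
  shows "lin_comb n x a = lin_comb n a x"
  using assms unfolding lin_comb_def by (intro finsum_lessThan_cong) (auto simp: m_comm)

lemma lin_comb_zero:
  assumes "\<forall>i<n. a i \<in> carrier R"
  shows "lin_comb n (\<lambda>i. \<zero>) a = \<zero>"
proof -
  have "lin_comb n (\<lambda>i. \<zero>) a = (\<Oplus>i\<in>{..<n}. \<zero>)"
    unfolding lin_comb_def using assms by (intro finsum_lessThan_cong) auto
  then show ?thesis by simp
qed

lemma lin_comb_add:
  assumes "\<forall>i<n. x i \<in> carrier R" "\<forall>i<n. y i \<in> carrier R" "\<forall>i<n. a i \<in> carrier R"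
  shows "lin_comb n (\<lambda>i. x i \<oplus> y i) a = lin_comb n x a \<oplus> lin_comb n y a"
proof -
  have "lin_comb n (\<lambda>i. x i \<oplus> y i) a = (\<Oplus>i\<in>{..<n}. x i \<otimes> a i \<oplus> y i \<otimes> a i)"
    unfolding lin_comb_def using assms by (intro finsum_lessThan_cong) (auto simp: l_distr)
  then show ?thesis
    using assms by (simp add: lin_comb_def finsum_addf Pi_def)
qed

lemma lin_comb_neg:
  assumes "\<forall>i<n. x i \<in> carrier R" "\<forall>i<n. a i \<in> carrier R"
  shows "lin_comb n (\<lambda>i. \<ominus> x i) a = \<ominus> lin_comb n x a"
proof -
  have "lin_comb n (\<lambda>i. \<ominus> x i) a \<oplus> lin_comb n x a = lin_comb n (\<lambda>i. \<ominus> x i \<oplus> x i) a"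
    using assms by (simp add: lin_comb_add)
  also have "\<dots> = lin_comb n (\<lambda>i. \<zero>) a"
    using assms by (intro lin_comb_cong) (auto simp: l_neg)
  also have "\<dots> = \<zero>"
    using assms by (simp add: lin_comb_zero)
  finally show ?thesis
    using assms by (intro minus_equality[symmetric]) (auto intro!: lin_comb_closed)
qed

lemma lin_comb_diff:
  assumes "\<forall>i<n. x i \<in> carrier R" "\<forall>i<n. y i \<in> carrier R" "\<forall>i<n. a i \<in> carrier R"
  shows "lin_comb n (\<lambda>i. x i \<ominus> y i) a = lin_comb n x a \<ominus> lin_comb n y a"
  using assms by (simp add: minus_eq lin_comb_add lin_comb_neg)

lemma lin_comb_diff_right:
  assumes "\<forall>i<n. x i \<in> carrier R" "\<forall>i<n. a i \<in> carrier R" "\<forall>i<n. b i \<in> carrier R"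
  shows "lin_comb n x (\<lambda>i. a i \<ominus> b i) = lin_comb n x a \<ominus> lin_comb n x b"
  using assms lin_comb_diff[of n a b x] by (simp add: lin_comb_comm[of n x])

lemma lin_comb_smult:
  assumes "c \<in> carrier R" "\<forall>i<n. x i \<in> carrier R" "\<forall>i<n. a i \<in> carrier R"
  shows "c \<otimes> lin_comb n x a = lin_comb n (\<lambda>i. c \<otimes> x i) a"
proof -
  have "c \<otimes> lin_comb n x a = (\<Oplus>i\<in>{..<n}. c \<otimes> (x i \<otimes> a i))"
    using assms by (simp add: lin_comb_def finsum_rdistr Pi_def)
  also have "\<dots> = lin_comb n (\<lambda>i. c \<otimes> x i) a"
    unfolding lin_comb_def using assms by (intro finsum_lessThan_cong) (auto simp: m_assoc)
  finally show ?thesis .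
qed

lemma lin_comb_single_left:
  assumes "k < n" "c \<in> carrier R" "\<forall>i<n. a i \<in> carrier R"
  shows "lin_comb n (\<lambda>i. if k = i then c else \<zero>) a = c \<otimes> a k"
proof -
  have "lin_comb n (\<lambda>i. if k = i then c else \<zero>) a = (\<Oplus>i\<in>{..<n}. if k = i then c \<otimes> a i else \<zero>)"
    unfolding lin_comb_def using assms by (intro finsum_lessThan_cong) auto
  then show ?thesis
    using assms by (simp add: finsum_singleton Pi_def)
qed

lemma lin_comb_single_right:
  assumes "k < n" "c \<in> carrier R" "\<forall>i<n. x i \<in> carrier R"
  shows "lin_comb n x (\<lambda>i. if i = k then c else \<zero>) = x k \<otimes> c"
  using assms lin_comb_single_left[of k n c x] lin_comb_comm[of n x]
  by (simp add: eq_commute m_comm)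

lemma lin_comb_Suc_shift:
  assumes "\<forall>i<Suc n. x i \<in> carrier R" "\<forall>i<Suc n. a i \<in> carrier R"
  shows "lin_comb (Suc n) x a = x 0 \<otimes> a 0 \<oplus> lin_comb n (\<lambda>i. x (Suc i)) (\<lambda>i. a (Suc i))"
  using assms unfolding lin_comb_def by (intro finsum_lessThan_Suc_shift) auto

lemma lin_comb_append:
  assumes "\<forall>i<m + n. x i \<in> carrier R" "\<forall>i<m + n. a i \<in> carrier R"
  shows "lin_comb (m + n) x a = lin_comb m x a \<oplus> lin_comb n (\<lambda>i. x (m + i)) (\<lambda>i. a (m + i))"
  using assms unfolding lin_comb_def by (intro finsum_lessThan_add) auto

lemma lin_comb_vec_mat:
  assumes "\<forall>i<n. x i \<in> carrier R" "\<forall>i<n. \<forall>k<m. M i k \<in> carrier R" "\<forall>k<m. v k \<in> carrier R"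
  shows "lin_comb m (vec_mat n x M) v = lin_comb n x (\<lambda>i. lin_comb m (M i) v)"
proof -
  have "lin_comb m (vec_mat n x M) v = (\<Oplus>k\<in>{..<m}. \<Oplus>i\<in>{..<n}. x i \<otimes> M i k \<otimes> v k)"
    unfolding lin_comb_def vec_mat_def using assms
    by (intro finsum_lessThan_cong) (auto simp: finsum_ldistr finsum_closed Pi_def)
  also have "\<dots> = (\<Oplus>i\<in>{..<n}. \<Oplus>k\<in>{..<m}. x i \<otimes> M i k \<otimes> v k)"
    using assms by (intro finsum_lessThan_swap[symmetric]) auto
  also have "\<dots> = lin_comb n x (\<lambda>i. lin_comb m (M i) v)"
    unfolding lin_comb_def using assms
    by (intro finsum_lessThan_cong) (auto simp: lin_comb_smult[unfolded lin_comb_def] finsum_closed Pi_def)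
  finally show ?thesis .
qed

lemma vec_mat_closed:
  assumes "\<forall>i<n. x i \<in> carrier R" "\<forall>i<n. M i k \<in> carrier R"
  shows "vec_mat n x M k \<in> carrier R"
  using assms by (simp add: vec_mat_def lin_comb_closed)

lemma vec_mat_assoc:
  assumes "\<forall>j<m. c j \<in> carrier R" "\<forall>j<m. \<forall>i<n. s j i \<in> carrier R" "\<forall>i<n. M i k \<in> carrier R"
  shows "vec_mat n (vec_mat m c s) M k = vec_mat m c (\<lambda>j. vec_mat n (s j) M) k"
proof -
  have "vec_mat n (vec_mat m c s) M k = lin_comb n (vec_mat m c s) (\<lambda>i. M i k)"
    by (simp only: vec_mat_def[of n])
  also have "\<dots> = lin_comb m c (\<lambda>j. lin_comb n (s j) (\<lambda>i. M i k))"
    using assms by (intro lin_comb_vec_mat) auto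
  finally show ?thesis
    by (simp only: vec_mat_def)
qed

lemma syzygy_iff:
  "syzygy R n a r \<longleftrightarrow> (\<forall>i<n. r i \<in> carrier R) \<and> (\<forall>i\<ge>n. r i = \<zero>) \<and> lin_comb n r a = \<zero>"
  unfolding syzygy_def lin_comb_def ..

definition vec_trunc :: "nat \<Rightarrow> (nat \<Rightarrow> 'a) \<Rightarrow> nat \<Rightarrow> 'a" where
  "vec_trunc n x i = (if i < n then x i else \<zero>)"

lemma syzygy_vec_trunc:
  assumes "\<forall>i<n. x i \<in> carrier R" "\<forall>i<n. a i \<in> carrier R" "lin_comb n x a = \<zero>"
  shows "syzygy R n a (vec_trunc n x)"
proof -
  have "lin_comb n (vec_trunc n x) a = lin_comb n x a"
    using assms by (intro lin_comb_cong) (auto simp: vec_trunc_def)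
  then show ?thesis
    using assms by (auto simp: syzygy_iff vec_trunc_def)
qed

definition lin_span :: "nat \<Rightarrow> nat \<Rightarrow> (nat \<Rightarrow> nat \<Rightarrow> 'a) \<Rightarrow> (nat \<Rightarrow> 'a) set" where
  "lin_span n m s = {r. \<exists>c. (\<forall>j<m. c j \<in> carrier R) \<and> (\<forall>i<n. r i = vec_mat m c s i)}"

definition syzygies_fg :: "nat \<Rightarrow> (nat \<Rightarrow> 'a) \<Rightarrow> bool" where
  "syzygies_fg n a \<longleftrightarrow>
     (\<exists>m s. (\<forall>j<m. syzygy R n a (s j)) \<and> (\<forall>r. syzygy R n a r \<longrightarrow> r \<in> lin_span n m s))"

lemma lin_span_cong:
  assumes "\<forall>j<m. \<forall>i<n. s j i = s' j i" "\<forall>j<m. \<forall>i<n. s' j i \<in> carrier R"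
  shows "lin_span n m s = lin_span n m s'"
proof -
  have "vec_mat m c s i = vec_mat m c s' i" if "\<forall>j<m. c j \<in> carrier R" "i < n" for c i
    using assms that unfolding vec_mat_def by (intro lin_comb_cong) auto
  then show ?thesis
    unfolding lin_span_def by (intro Collect_cong) (metis (no_types, lifting))
qed

lemma syzygies_fgI:
  assumes a: "\<forall>i<n. a i \<in> carrier R" and s: "\<forall>j<m. \<forall>i<n. s j i \<in> carrier R"
    and s_syz: "\<forall>j<m. lin_comb n (s j) a = \<zero>"
    and span: "\<And>r. syzygy R n a r \<Longrightarrow> r \<in> lin_span n m s"
  shows "syzygies_fg n a"
  unfolding syzygies_fg_def
proof (intro exI conjI allI impI)
  fix j assume "j < m"
  then show "syzygy R n a (vec_trunc n (s j))"
    using a s s_syz by (intro syzygy_vec_trunc) auto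
next
  fix r assume "syzygy R n a r"
  then obtain c where c: "\<forall>j<m. c j \<in> carrier R" "\<forall>i<n. r i = vec_mat m c s i"
    using span unfolding lin_span_def by blast
  have "\<forall>i<n. vec_mat m c s i = vec_mat m c (\<lambda>j. vec_trunc n (s j)) i"
    using c s by (auto simp: vec_mat_def vec_trunc_def intro!: lin_comb_cong)
  then show "r \<in> lin_span n m (\<lambda>j. vec_trunc n (s j))"
    using c unfolding lin_span_def by auto
qed

lemma syzygies_fgE:
  assumes "syzygies_fg n a" and a: "\<forall>i<n. a i \<in> carrier R"
  obtains m s where "\<forall>j<m. \<forall>i<n. s j i \<in> carrier R" "\<forall>j<m. lin_comb n (s j) a = \<zero>"
    "\<And>x. \<forall>i<n. x i \<in> carrier R \<Longrightarrow> lin_comb n x a = \<zero> \<Longrightarrow> x \<in> lin_span n m s"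
proof -
  obtain m s where s: "\<forall>j<m. syzygy R n a (s j)" and span: "\<And>r. syzygy R n a r \<Longrightarrow> r \<in> lin_span n m s"
    using assms(1) unfolding syzygies_fg_def by blast
  show thesis
  proof (rule that[of m s])
    show "\<forall>j<m. \<forall>i<n. s j i \<in> carrier R" "\<forall>j<m. lin_comb n (s j) a = \<zero>"
      using s by (simp_all add: syzygy_iff)
  next
    fix x assume "\<forall>i<n. x i \<in> carrier R" "lin_comb n x a = \<zero>"
    then have "vec_trunc n x \<in> lin_span n m s"
      using a by (intro span syzygy_vec_trunc)
    then show "x \<in> lin_span n m s"
      by (simp add: lin_span_def vec_trunc_def)
  qed
qed

lemma vec_mat_in_lin_span:
  assumes "\<forall>j<m. c j \<in> carrier R"
  shows "vec_mat m c s \<in> lin_span n m s"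
  using assms unfolding lin_span_def by blast

lemma lin_span_vec_mat:
  assumes x: "x \<in> lin_span n m s" and s: "\<forall>j<m. \<forall>i<n. s j i \<in> carrier R"
    and M: "\<forall>i<n. \<forall>k<N. M i k \<in> carrier R"
  shows "vec_mat n x M \<in> lin_span N m (\<lambda>j. vec_mat n (s j) M)"
proof -
  obtain c where c: "\<forall>j<m. c j \<in> carrier R" "\<forall>i<n. x i = vec_mat m c s i"
    using x unfolding lin_span_def by blast
  have "vec_mat n x M k = vec_mat m c (\<lambda>j. vec_mat n (s j) M) k" if "k < N" for k
  proof -
    have "vec_mat n x M k = vec_mat n (vec_mat m c s) M k"
      unfolding vec_mat_def[of n] using c s M that by (intro lin_comb_cong) (auto intro: vec_mat_closed)
    also have "\<dots> = vec_mat m c (\<lambda>j. vec_mat n (s j) M) k"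
      using c s M that by (intro vec_mat_assoc) auto
    finally show ?thesis .
  qed
  then show ?thesis
    using c unfolding lin_span_def by blast
qed

lemma vec_mat_append:
  assumes "\<forall>j<m1. c j \<in> carrier R" "\<forall>j<m2. d j \<in> carrier R"
    and "\<forall>j<m1. s j i \<in> carrier R" "\<forall>j<m2. g j i \<in> carrier R"
  shows "vec_mat (m1 + m2) (append_seq m1 c d) (append_seq m1 s g) i = vec_mat m1 c s i \<oplus> vec_mat m2 d g i"
  unfolding vec_mat_def using assms
  by (subst lin_comb_append) (auto simp: append_seq_def intro!: arg_cong2[where f = "(\<oplus>)"] lin_comb_cong)

lemma lin_span_append:
  assumes x: "x \<in> lin_span n m1 s" and y: "y \<in> lin_span n m2 g"
    and s: "\<forall>j<m1. \<forall>i<n. s j i \<in> carrier R" and g: "\<forall>j<m2. \<forall>i<n. g j i \<in> carrier R"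
    and r: "\<forall>i<n. r i = x i \<oplus> y i"
  shows "r \<in> lin_span n (m1 + m2) (append_seq m1 s g)"
proof -
  obtain c d where c: "\<forall>j<m1. c j \<in> carrier R" "\<forall>i<n. x i = vec_mat m1 c s i"
    and d: "\<forall>j<m2. d j \<in> carrier R" "\<forall>i<n. y i = vec_mat m2 d g i"
    using x y unfolding lin_span_def by blast
  have "\<forall>j<m1 + m2. append_seq m1 c d j \<in> carrier R"
    using c d by (simp add: append_seq_def)
  moreover have "\<forall>i<n. r i = vec_mat (m1 + m2) (append_seq m1 c d) (append_seq m1 s g) i"
    using c d s g r by (simp add: vec_mat_append)
  ultimately show ?thesis
    unfolding lin_span_def by blast
qed

lemma lin_comb_vec_mat_generators:
  assumes x: "\<forall>i<n. x i \<in> carrier R" and a: "\<forall>i<n. a i \<in> carrier R" and b: "\<forall>k<m. b k \<in> carrier R"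
    and Q: "\<forall>i<n. \<forall>k<m. Q i k \<in> carrier R" and a_eq: "\<forall>i<n. a i = lin_comb m (Q i) b"
  shows "lin_comb m (vec_mat n x Q) b = lin_comb n x a"
  using lin_comb_vec_mat[OF x Q b] a_eq x a by (auto intro!: lin_comb_cong)

lemma vec_mat_split_identity:
  assumes r: "\<forall>k<m. r k \<in> carrier R" and P: "\<forall>k<m. \<forall>i<n. P k i \<in> carrier R"
    and Q: "\<forall>i<n. \<forall>k<m. Q i k \<in> carrier R" and "k' < m"
  shows "r k' = vec_mat n (vec_mat m r P) Q k'
    \<oplus> vec_mat m r (\<lambda>k k'. (if k = k' then \<one> else \<zero>) \<ominus> vec_mat n (P k) Q k') k'"
proof -
  have "vec_mat m r (\<lambda>k k'. (if k = k' then \<one> else \<zero>) \<ominus> vec_mat n (P k) Q k') k'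
      = r k' \<ominus> vec_mat m r (\<lambda>k. vec_mat n (P k) Q) k'"
    unfolding vec_mat_def[of m r] using assms
    by (simp add: lin_comb_diff_right lin_comb_single_right vec_mat_closed)
  also have "vec_mat m r (\<lambda>k. vec_mat n (P k) Q) k' = vec_mat n (vec_mat m r P) Q k'"
    using assms by (intro vec_mat_assoc[symmetric]) auto
  finally have "vec_mat m r (\<lambda>k k'. (if k = k' then \<one> else \<zero>) \<ominus> vec_mat n (P k) Q k') k'
      = r k' \<ominus> vec_mat n (vec_mat m r P) Q k'" .
  moreover have "vec_mat n (vec_mat m r P) Q k' \<in> carrier R" "r k' \<in> carrier R"
    using assms by (auto intro!: vec_mat_closed)
  ultimately show ?thesis
    by algebra
qed

lemma lin_comb_identity_minus_vec_mat:
  assumes "k < m" and a: "\<forall>i<n. a i \<in> carrier R" and b: "\<forall>k<m. b k \<in> carrier R"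
    and P: "\<forall>k<m. \<forall>i<n. P k i \<in> carrier R" and b_eq: "\<forall>k<m. b k = lin_comb n (P k) a"
    and Q: "\<forall>i<n. \<forall>k<m. Q i k \<in> carrier R" and a_eq: "\<forall>i<n. a i = lin_comb m (Q i) b"
  shows "lin_comb m (\<lambda>k'. (if k = k' then \<one> else \<zero>) \<ominus> vec_mat n (P k) Q k') b = \<zero>"
proof -
  have "lin_comb m (\<lambda>k'. (if k = k' then \<one> else \<zero>) \<ominus> vec_mat n (P k) Q k') b
      = b k \<ominus> lin_comb m (vec_mat n (P k) Q) b"
    using assms by (simp add: lin_comb_diff lin_comb_single_left vec_mat_closed)
  also have "lin_comb m (vec_mat n (P k) Q) b = lin_comb n (P k) a"
    using \<open>k < m\<close> P by (intro lin_comb_vec_mat_generators[OF _ a b Q a_eq]) simp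
  also have "\<dots> = b k"
    using b_eq \<open>k < m\<close> by simp
  finally show ?thesis
    using \<open>k < m\<close> b by (simp add: r_neg minus_eq)
qed

lemma syzygies_fg_change_generators:
  fixes n m :: nat
  assumes a: "\<forall>i<n. a i \<in> carrier R" and b: "\<forall>k<m. b k \<in> carrier R"
    and P: "\<forall>k<m. \<forall>i<n. P k i \<in> carrier R" and b_eq: "\<forall>k<m. b k = lin_comb n (P k) a"
    and Q: "\<forall>i<n. \<forall>k<m. Q i k \<in> carrier R" and a_eq: "\<forall>i<n. a i = lin_comb m (Q i) b"
    and "syzygies_fg n a"
  shows "syzygies_fg m b"
proof -
  obtain m1 s where s: "\<forall>j<m1. \<forall>i<n. s j i \<in> carrier R" and s_syz: "\<forall>j<m1. lin_comb n (s j) a = \<zero>"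
    and s_span: "\<And>x. \<forall>i<n. x i \<in> carrier R \<Longrightarrow> lin_comb n x a = \<zero> \<Longrightarrow> x \<in> lin_span n m1 s"
    by (rule syzygies_fgE[OF \<open>syzygies_fg n a\<close> a]) blast
  have sQ: "\<forall>j<m1. \<forall>k<m. vec_mat n (s j) Q k \<in> carrier R"
    using s Q by (auto intro!: vec_mat_closed)
  define g where "g = (\<lambda>k k'. (if k = k' then \<one> else \<zero>) \<ominus> vec_mat n (P k) Q k')"
  have g: "\<forall>k<m. \<forall>k'<m. g k k' \<in> carrier R"
    using P Q by (auto simp: g_def intro!: vec_mat_closed)
  show ?thesis
  proof (rule syzygies_fgI[OF b])
    show "\<forall>j<m1 + m. \<forall>k<m. append_seq m1 (\<lambda>j. vec_mat n (s j) Q) g j k \<in> carrier R"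
      using g sQ by (auto simp: append_seq_def)
    show "\<forall>j<m1 + m. lin_comb m (append_seq m1 (\<lambda>j. vec_mat n (s j) Q) g j) b = \<zero>"
      using s s_syz lin_comb_vec_mat_generators[OF _ a b Q a_eq]
        lin_comb_identity_minus_vec_mat[OF _ a b P b_eq Q a_eq]
      by (auto simp: append_seq_def g_def)
  next
    fix r assume r: "syzygy R m b r"
    then have r_carr: "\<forall>k<m. r k \<in> carrier R"
      by (simp add: syzygy_iff)
    have "lin_comb n (vec_mat m r P) a = \<zero>"
      using r lin_comb_vec_mat_generators[OF r_carr b a P b_eq] by (simp add: syzygy_iff)
    then have "vec_mat m r P \<in> lin_span n m1 s"
      using r_carr P by (intro s_span) (auto intro: vec_mat_closed)
    then have "vec_mat n (vec_mat m r P) Q \<in> lin_span m m1 (\<lambda>j. vec_mat n (s j) Q)"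
      using s Q by (rule lin_span_vec_mat)
    moreover have "vec_mat m r g \<in> lin_span m m g"
      using r_carr by (rule vec_mat_in_lin_span)
    ultimately show "r \<in> lin_span m (m1 + m) (append_seq m1 (\<lambda>j. vec_mat n (s j) Q) g)"
      using sQ g vec_mat_split_identity[OF r_carr P Q] unfolding g_def
      by (intro lin_span_append) auto
  qed
qed

lemma lin_combs_ideal:
  assumes a: "\<forall>i<n. a i \<in> carrier R"
  shows "ideal {lin_comb n x a | x. \<forall>i<n. x i \<in> carrier R} R"
    (is "ideal ?L R")
proof (rule idealI[OF ring_axioms])
  show "subgroup ?L (add_monoid R)"
  proof (rule add.subgroupI)
    show "?L \<subseteq> carrier R"
      using a by (auto intro!: lin_comb_closed)
    have "\<zero> = lin_comb n (\<lambda>i. \<zero>) a"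
      using a by (simp add: lin_comb_zero)
    then show "?L \<noteq> {}"
      by blast
  next
    fix y assume "y \<in> ?L"
    then obtain x where "\<forall>i<n. x i \<in> carrier R" "y = lin_comb n x a"
      by blast
    then show "\<ominus> y \<in> ?L"
      using a by (auto simp: lin_comb_neg[symmetric] intro!: exI[of _ "\<lambda>i. \<ominus> x i"])
  next
    fix y z assume "y \<in> ?L" "z \<in> ?L"
    then obtain x x' where "\<forall>i<n. x i \<in> carrier R" "y = lin_comb n x a"
      and "\<forall>i<n. x' i \<in> carrier R" "z = lin_comb n x' a"
      by blast
    then show "y \<oplus> z \<in> ?L"
      using a by (auto simp: lin_comb_add[symmetric] intro!: exI[of _ "\<lambda>i. x i \<oplus> x' i"])
  qed
next
  fix y c assume "y \<in> ?L" "c \<in> carrier R"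
  then obtain x where x: "\<forall>i<n. x i \<in> carrier R" "y = lin_comb n x a"
    by blast
  then show "c \<otimes> y \<in> ?L"
    using a \<open>c \<in> carrier R\<close> by (auto simp: lin_comb_smult intro!: exI[of _ "\<lambda>i. c \<otimes> x i"])
  then show "y \<otimes> c \<in> ?L"
    using a x \<open>c \<in> carrier R\<close> by (simp add: m_comm lin_comb_closed)
qed

lemma genideal_imp_lin_comb:
  assumes a: "\<forall>i<n. a i \<in> carrier R" and y: "y \<in> Idl (a ` {..<n})"
  shows "\<exists>x. (\<forall>i<n. x i \<in> carrier R) \<and> y = lin_comb n x a"
proof -
  have "a k \<in> {lin_comb n x a | x. \<forall>i<n. x i \<in> carrier R}" if "k < n" for k
    using a that lin_comb_single_left[of k n "\<one>" a, symmetric] by fastforce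
  then have "Idl (a ` {..<n}) \<subseteq> {lin_comb n x a | x. \<forall>i<n. x i \<in> carrier R}"
    using a by (intro genideal_minimal lin_combs_ideal) auto
  then show ?thesis
    using y by blast
qed

lemma syzygies_fg_same_ideal:
  fixes n m :: nat
  assumes a: "\<forall>i<n. a i \<in> carrier R" and b: "\<forall>k<m. b k \<in> carrier R"
    and same: "Idl (a ` {..<n}) = Idl (b ` {..<m})" and "syzygies_fg n a"
  shows "syzygies_fg m b"
proof -
  have "\<forall>k<m. \<exists>x. (\<forall>i<n. x i \<in> carrier R) \<and> b k = lin_comb n x a"
    using b genideal_self[of "b ` {..<m}"] by (auto simp: same[symmetric] intro!: genideal_imp_lin_comb[OF a])
  then obtain P where P: "\<forall>k<m. \<forall>i<n. P k i \<in> carrier R" "\<forall>k<m. b k = lin_comb n (P k) a"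
    by metis
  have "\<forall>i<n. \<exists>x. (\<forall>k<m. x k \<in> carrier R) \<and> a i = lin_comb m x b"
    using a genideal_self[of "a ` {..<n}"] by (auto simp: same intro!: genideal_imp_lin_comb[OF b])
  then obtain Q where Q: "\<forall>i<n. \<forall>k<m. Q i k \<in> carrier R" "\<forall>i<n. a i = lin_comb m (Q i) b"
    by metis
  show ?thesis
    using syzygies_fg_change_generators[OF a b P Q \<open>syzygies_fg n a\<close>] .
qed

lemma finitely_presented_ideal_iff:
  "finitely_presented_ideal R I \<longleftrightarrow>
     (\<exists>n a. (\<forall>i<n. a i \<in> carrier R) \<and> I = Idl (a ` {..<n}) \<and> syzygies_fg n a)"
  unfolding finitely_presented_ideal_def syzygies_fg_def lin_span_def vec_mat_def lin_comb_def
    mem_Collect_eq ..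

lemma syzygies_fg_if_coherent:
  assumes "coherent_ring R" and a: "\<forall>i<n. a i \<in> carrier R"
  shows "syzygies_fg n a"
proof -
  have "ideal (Idl (a ` {..<n})) R"
    using a by (intro genideal_ideal) auto
  moreover have "finitely_generated_ideal R (Idl (a ` {..<n}))"
    unfolding finitely_generated_ideal_def using a by (intro exI[of _ "a ` {..<n}"]) auto
  ultimately have "finitely_presented_ideal R (Idl (a ` {..<n}))"
    using \<open>coherent_ring R\<close> unfolding coherent_ring_def by blast
  then obtain m b where "\<forall>k<m. b k \<in> carrier R" "Idl (a ` {..<n}) = Idl (b ` {..<m})" "syzygies_fg m b"
    unfolding finitely_presented_ideal_iff by (elim exE conjE) (rule that)
  then show ?thesis
    using a by (auto intro: syzygies_fg_same_ideal[of m b n a])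
qed

lemma finitely_presented_zero_ideal: "finitely_presented_ideal R {\<zero>}"
proof -
  have "Idl {} \<subseteq> {\<zero>}"
    by (intro genideal_minimal zeroideal) auto
  then have "Idl ((\<lambda>_. \<zero>) ` {..<0::nat}) = {\<zero>}"
    using additive_subgroup.zero_closed[OF ideal.axioms(1)[OF genideal_ideal[of "{}"]]] by auto
  moreover have "syzygies_fg 0 (\<lambda>_. \<zero>)"
    by (rule syzygies_fgI[where m = 0]) (auto simp: lin_span_def)
  ultimately show ?thesis
    unfolding finitely_presented_ideal_iff by blast
qed

lemma finitely_presented_unit_ideal: "finitely_presented_ideal R (carrier R)"
proof -
  have "Idl ((\<lambda>_. \<one>) ` {..<1::nat}) = carrier R"
    by (simp add: genideal_one lessThan_Suc)
  moreover have "syzygies_fg 1 (\<lambda>_. \<one>)"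
  proof (rule syzygies_fgI[where m = 0])
    fix r assume "syzygy R 1 (\<lambda>_. \<one>) r"
    then have "r 0 = \<zero>"
      using lin_comb_Suc_shift[of 0 r "\<lambda>_. \<one>"] by (simp add: syzygy_iff lin_comb_def)
    then show "r \<in> lin_span 1 0 s" for s
      by (simp add: lin_span_def vec_mat_def lin_comb_def)
  qed auto
  ultimately show ?thesis
    unfolding finitely_presented_ideal_iff by blast
qed

lemma lin_comb_lin_span_syzygies:
  assumes x: "x \<in> lin_span n m G" and G: "\<forall>j<m. \<forall>i<n. G j i \<in> carrier R"
    and a: "\<forall>i<n. a i \<in> carrier R" and G_syz: "\<forall>j<m. lin_comb n (G j) a = \<zero>"
  shows "lin_comb n x a = \<zero>"
proof -
  obtain d where d: "\<forall>j<m. d j \<in> carrier R" "\<forall>i<n. x i = vec_mat m d G i"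
    using x unfolding lin_span_def by blast
  have "lin_comb n x a = lin_comb n (vec_mat m d G) a"
    using d G a by (intro lin_comb_cong) (auto intro: vec_mat_closed)
  also have "\<dots> = lin_comb m d (\<lambda>j. lin_comb n (G j) a)"
    using d G a by (intro lin_comb_vec_mat) auto
  also have "\<dots> = lin_comb m (\<lambda>_. \<zero>) d"
    using d G a G_syz by (subst lin_comb_comm) (auto intro!: lin_comb_cong lin_comb_closed)
  finally show ?thesis
    using d by (simp add: lin_comb_zero)
qed

lemma rcos_cgenideal_eq_iff:
  assumes u: "u \<in> carrier R" and x: "x \<in> carrier R" and y: "y \<in> carrier R"
  shows "PIdl u +> x = PIdl u +> y \<longleftrightarrow> (\<exists>w\<in>carrier R. x = y \<oplus> w \<otimes> u)"
proof -
  have "PIdl u +> x = PIdl u +> y \<longleftrightarrow> x \<ominus> y \<in> PIdl u"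
    by (rule rcos_eq_iff_diff_mem[OF cgenideal_ideal[OF u] x y])
  also have "\<dots> \<longleftrightarrow> (\<exists>w\<in>carrier R. x \<ominus> y = w \<otimes> u)"
    by (auto simp: cgenideal_def)
  also have "\<dots> \<longleftrightarrow> (\<exists>w\<in>carrier R. x = y \<oplus> w \<otimes> u)"
  proof (intro bex_cong refl iffI)
    fix w assume "w \<in> carrier R" "x \<ominus> y = w \<otimes> u"
    moreover have "x = y \<oplus> (x \<ominus> y)"
      using x y by algebra
    ultimately show "x = y \<oplus> w \<otimes> u"
      by simp
  next
    fix w assume w: "w \<in> carrier R" and "x = y \<oplus> w \<otimes> u"
    moreover have "(y \<oplus> w \<otimes> u) \<ominus> y = w \<otimes> u"
      using y w u by algebra
    ultimately show "x \<ominus> y = w \<otimes> u"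
      by simp
  qed
  finally show ?thesis .
qed

lemma cons_lift_syzygy:
  assumes "\<forall>i<n. x i \<in> carrier R" "\<forall>i<n. a i \<in> carrier R" "t \<in> carrier R" "u \<in> carrier R"
    and "lin_comb n x a = t \<otimes> u"
  shows "lin_comb (Suc n) (case_nat (\<ominus> t) x) (case_nat u a) = \<zero>"
  using assms by (simp add: lin_comb_Suc_shift All_less_Suc2 l_minus l_neg)

lemma koszul_syzygy:
  assumes "k < n" "\<forall>i<n. a i \<in> carrier R" "u \<in> carrier R"
  shows "lin_comb (Suc n) (case_nat (\<ominus> a k) (\<lambda>i. if k = i then u else \<zero>)) (case_nat u a) = \<zero>"
  using assms by (simp add: lin_comb_Suc_shift All_less_Suc2 lin_comb_single_left r_minus l_neg m_comm)

end

lemma (in ring_hom_cring) hom_lin_comb: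
  assumes "\<forall>i<n. x i \<in> carrier R" "\<forall>i<n. a i \<in> carrier R"
  shows "h (R.lin_comb n x a) = S.lin_comb n (\<lambda>i. h (x i)) (\<lambda>i. h (a i))"
  using assms unfolding R.lin_comb_def S.lin_comb_def
  by (subst hom_finsum) (auto simp: Pi_def intro!: S.finsum_cong)

lemma (in ring_hom_cring) hom_vec_mat:
  assumes "\<forall>j<m. c j \<in> carrier R" "\<forall>j<m. M j k \<in> carrier R"
  shows "h (R.vec_mat m c M k) = S.vec_mat m (\<lambda>j. h (c j)) (\<lambda>j k. h (M j k)) k"
  using assms by (simp add: R.vec_mat_def S.vec_mat_def hom_lin_comb)

locale principal_quotient = cring +
  fixes u assumes u_carr: "u \<in> carrier R"
begin

sublocale Q: cring "R Quot PIdl u"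
  by (rule ideal.quotient_is_cring[OF cgenideal_ideal[OF u_carr] is_cring])

sublocale p: ring_hom_cring R "R Quot PIdl u" "(+>) (PIdl u)"
  by (rule ideal.rcos_ring_hom_cring[OF cgenideal_ideal[OF u_carr] is_cring])

lemma quot_syzygies_lift:
  fixes n :: nat
  assumes a: "\<forall>i<n. a i \<in> carrier R" and "Q.syzygies_fg n (\<lambda>i. PIdl u +> a i)"
  obtains m S t where "\<forall>j<m. \<forall>i<n. S j i \<in> carrier R" "\<forall>j<m. t j \<in> carrier R"
    "\<forall>j<m. lin_comb n (S j) a = t j \<otimes> u"
    "\<And>x. \<forall>i<n. x i \<in> carrier (R Quot PIdl u) \<Longrightarrow>
      Q.lin_comb n x (\<lambda>i. PIdl u +> a i) = \<zero>\<^bsub>R Quot PIdl u\<^esub> \<Longrightarrow>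
      x \<in> Q.lin_span n m (\<lambda>j i. PIdl u +> S j i)"
proof -
  obtain m sb where sb: "\<forall>j<m. \<forall>i<n. sb j i \<in> carrier (R Quot PIdl u)"
    and sb_syz: "\<forall>j<m. Q.lin_comb n (sb j) (\<lambda>i. PIdl u +> a i) = \<zero>\<^bsub>R Quot PIdl u\<^esub>"
    and sb_span: "\<And>x. \<forall>i<n. x i \<in> carrier (R Quot PIdl u) \<Longrightarrow>
      Q.lin_comb n x (\<lambda>i. PIdl u +> a i) = \<zero>\<^bsub>R Quot PIdl u\<^esub> \<Longrightarrow> x \<in> Q.lin_span n m sb"
    using Q.syzygies_fgE[OF \<open>Q.syzygies_fg n (\<lambda>i. PIdl u +> a i)\<close>] a by (metis p.hom_closed)
  have "\<forall>j<m. \<forall>i<n. \<exists>x\<in>carrier R. PIdl u +> x = sb j i"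
    using sb quot_carrier_imp_rcos[OF cgenideal_ideal[OF u_carr]] by metis
  then obtain S where S: "\<forall>j<m. \<forall>i<n. S j i \<in> carrier R" and S_sb: "\<forall>j<m. \<forall>i<n. PIdl u +> S j i = sb j i"
    by metis
  have "\<exists>t\<in>carrier R. lin_comb n (S j) a = t \<otimes> u" if "j < m" for j
  proof -
    have "PIdl u +> lin_comb n (S j) a = Q.lin_comb n (sb j) (\<lambda>i. PIdl u +> a i)"
      using S S_sb sb a that by (simp add: p.hom_lin_comb) (rule Q.lin_comb_cong; simp)
    also have "\<dots> = PIdl u +> \<zero>"
      using sb_syz that by simp
    finally have "\<exists>t\<in>carrier R. lin_comb n (S j) a = \<zero> \<oplus> t \<otimes> u"
      using S a u_carr that by (subst (asm) rcos_cgenideal_eq_iff) (auto intro: lin_comb_closed)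
    then show ?thesis
      using u_carr by auto
  qed
  then obtain t where "\<forall>j<m. t j \<in> carrier R" "\<forall>j<m. lin_comb n (S j) a = t j \<otimes> u"
    by metis
  moreover have "Q.lin_span n m sb = Q.lin_span n m (\<lambda>j i. PIdl u +> S j i)"
    using S S_sb sb by (intro Q.lin_span_cong) auto
  ultimately show thesis
    using that S sb_span by auto
qed

lemma cons_syzygy_tail_decomp:
  fixes n m :: nat
  assumes a: "\<forall>i<n. a i \<in> carrier R" and S: "\<forall>j<m. \<forall>i<n. S j i \<in> carrier R"
    and span: "\<And>x. \<forall>i<n. x i \<in> carrier (R Quot PIdl u) \<Longrightarrow>
        Q.lin_comb n x (\<lambda>i. PIdl u +> a i) = \<zero>\<^bsub>R Quot PIdl u\<^esub> \<Longrightarrow>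
        x \<in> Q.lin_span n m (\<lambda>j i. PIdl u +> S j i)"
    and r: "syzygy R (Suc n) (case_nat u a) r"
  shows "\<exists>c w. (\<forall>j<m. c j \<in> carrier R) \<and> (\<forall>i<n. w i \<in> carrier R) \<and>
    (\<forall>i<n. r (Suc i) = vec_mat m c S i \<oplus> w i \<otimes> u)"
proof -
  have r_carr: "\<forall>i<Suc n. r i \<in> carrier R"
    using r by (simp add: syzygy_iff)
  have "lin_comb (Suc n) r (case_nat u a) = r 0 \<otimes> u \<oplus> lin_comb n (\<lambda>i. r (Suc i)) a"
    using r_carr a u_carr by (subst lin_comb_Suc_shift) (auto simp: All_less_Suc2)
  then have "lin_comb n (\<lambda>i. r (Suc i)) a = \<zero> \<oplus> (\<ominus> r 0) \<otimes> u"
    using r r_carr a u_carr by (simp add: syzygy_iff lin_comb_closed l_minus sum_zero_eq_neg a_comm)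
  then have "PIdl u +> lin_comb n (\<lambda>i. r (Suc i)) a = PIdl u +> \<zero>"
    using r_carr a u_carr by (subst rcos_cgenideal_eq_iff) (auto intro!: lin_comb_closed)
  then have "Q.lin_comb n (\<lambda>i. PIdl u +> r (Suc i)) (\<lambda>i. PIdl u +> a i) = \<zero>\<^bsub>R Quot PIdl u\<^esub>"
    using r_carr a by (simp add: p.hom_lin_comb)
  then have "(\<lambda>i. PIdl u +> r (Suc i)) \<in> Q.lin_span n m (\<lambda>j i. PIdl u +> S j i)"
    using r_carr by (intro span) auto
  then obtain cb where cb: "\<forall>j<m. cb j \<in> carrier (R Quot PIdl u)"
    and r_cb: "\<forall>i<n. PIdl u +> r (Suc i) = Q.vec_mat m cb (\<lambda>j i. PIdl u +> S j i) i"
    unfolding Q.lin_span_def by blast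
  have "\<forall>j<m. \<exists>x\<in>carrier R. PIdl u +> x = cb j"
    using cb quot_carrier_imp_rcos[OF cgenideal_ideal[OF u_carr]] by (metis (no_types))
  then obtain c where c: "\<forall>j<m. c j \<in> carrier R" "\<forall>j<m. PIdl u +> c j = cb j"
    by metis
  have "PIdl u +> r (Suc i) = PIdl u +> vec_mat m c S i" if "i < n" for i
  proof -
    have "PIdl u +> vec_mat m c S i = Q.vec_mat m cb (\<lambda>j i. PIdl u +> S j i) i"
      using c cb S that by (simp add: p.hom_vec_mat Q.vec_mat_def) (rule Q.lin_comb_cong; simp)
    then show ?thesis
      using r_cb that by simp
  qed
  then have "\<forall>i<n. \<exists>w\<in>carrier R. r (Suc i) = vec_mat m c S i \<oplus> w \<otimes> u"
    using r_carr c S u_carr by (auto simp: rcos_cgenideal_eq_iff vec_mat_closed)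
  then obtain w where "\<forall>i<n. w i \<in> carrier R" "\<forall>i<n. r (Suc i) = vec_mat m c S i \<oplus> w i \<otimes> u"
    by metis
  then show ?thesis
    using c by blast
qed

end

context domain
begin

lemma cons_syzygy_eq_if_tail_eq:
  assumes u: "u \<in> carrier R" "u \<noteq> \<zero>" and a: "\<forall>i<n. a i \<in> carrier R"
    and x: "\<forall>i<Suc n. x i \<in> carrier R" and y: "\<forall>i<Suc n. y i \<in> carrier R"
    and eq: "lin_comb (Suc n) x (case_nat u a) = lin_comb (Suc n) y (case_nat u a)"
    and tail: "\<forall>i<n. x (Suc i) = y (Suc i)"
  shows "x 0 = y 0"
proof -
  have "lin_comb n (\<lambda>i. x (Suc i)) a = lin_comb n (\<lambda>i. y (Suc i)) a"
    using tail a y by (intro lin_comb_cong) auto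
  then have "x 0 \<otimes> u = y 0 \<otimes> u"
    using eq u a x y by (simp add: lin_comb_Suc_shift All_less_Suc2 lin_comb_closed)
  then show ?thesis
    using u x y m_rcancel[of u "x 0" "y 0"] by auto
qed

lemma syzygies_fg_cons_of_lifts:
  fixes n m :: nat
  assumes u: "u \<in> carrier R" "u \<noteq> \<zero>" and a: "\<forall>i<n. a i \<in> carrier R"
    and S: "\<forall>j<m. \<forall>i<n. S j i \<in> carrier R" and t: "\<forall>j<m. t j \<in> carrier R"
    and S_t: "\<forall>j<m. lin_comb n (S j) a = t j \<otimes> u"
    and decomp: "\<And>r. syzygy R (Suc n) (case_nat u a) r \<Longrightarrow> \<exists>c w. (\<forall>j<m. c j \<in> carrier R) \<and>
        (\<forall>i<n. w i \<in> carrier R) \<and> (\<forall>i<n. r (Suc i) = vec_mat m c S i \<oplus> w i \<otimes> u)"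
  shows "syzygies_fg (Suc n) (case_nat u a)"
proof -
  define L where "L j = case_nat (\<ominus> t j) (S j)" for j
  define K where "K k = case_nat (\<ominus> a k) (\<lambda>i. if k = i then u else \<zero>)" for k
  have A: "\<forall>i<Suc n. case_nat u a i \<in> carrier R"
    using u a by (simp add: All_less_Suc2)
  have L: "\<forall>j<m. \<forall>i<Suc n. L j i \<in> carrier R" and K: "\<forall>k<n. \<forall>i<Suc n. K k i \<in> carrier R"
    using S t a u by (auto simp: L_def K_def All_less_Suc2)
  have G: "\<forall>j<m + n. \<forall>i<Suc n. append_seq m L K j i \<in> carrier R"
    using L K by (simp add: append_seq_def)
  have G_syz: "\<forall>j<m + n. lin_comb (Suc n) (append_seq m L K j) (case_nat u a) = \<zero>"
    using S t S_t a u
    by (auto simp: append_seq_def L_def K_def intro!: cons_lift_syzygy koszul_syzygy)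
  show ?thesis
  proof (rule syzygies_fgI[OF A G G_syz])
    fix r assume r: "syzygy R (Suc n) (case_nat u a) r"
    then obtain c w where c: "\<forall>j<m. c j \<in> carrier R" and w: "\<forall>i<n. w i \<in> carrier R"
      and r_tail: "\<forall>i<n. r (Suc i) = vec_mat m c S i \<oplus> w i \<otimes> u"
      using decomp by blast
    define v where "v i = vec_mat m c L i \<oplus> vec_mat n w K i" for i
    have v: "v \<in> lin_span (Suc n) (m + n) (append_seq m L K)"
      using L K vec_mat_in_lin_span[OF c, where n = "Suc n" and s = L]
        vec_mat_in_lin_span[OF w, where n = "Suc n" and s = K]
      by (intro lin_span_append) (auto simp: v_def)
    have v_tail: "\<forall>i<n. v (Suc i) = r (Suc i)"
      using r_tail c w S u by (simp add: v_def vec_mat_def L_def K_def lin_comb_single_right)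
    have "r 0 = v 0"
      using r lin_comb_lin_span_syzygies[OF v G A G_syz] v_tail c w L K
      by (intro cons_syzygy_eq_if_tail_eq[OF u a, of r v]) (auto simp: syzygy_iff v_def intro!: vec_mat_closed)
    then have "\<forall>i<Suc n. r i = v i"
      using v_tail by (auto simp: less_Suc_eq_0_disj)
    then show "r \<in> lin_span (Suc n) (m + n) (append_seq m L K)"
      using v unfolding lin_span_def by auto
  qed
qed

lemma syzygies_fg_cons:
  fixes n :: nat
  assumes a: "\<forall>i<n. a i \<in> carrier R" and u: "u \<in> carrier R" "u \<noteq> \<zero>"
    and quot: "cring.syzygies_fg (R Quot PIdl u) n (\<lambda>i. PIdl u +> a i)"
  shows "syzygies_fg (Suc n) (case_nat u a)"
proof -
  interpret principal_quotient R u
    by unfold_locales (rule u(1))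
  obtain m S t where S: "\<forall>j<m. \<forall>i<n. S j i \<in> carrier R" and t: "\<forall>j<m. t j \<in> carrier R"
      "\<forall>j<m. lin_comb n (S j) a = t j \<otimes> u"
    and span: "\<And>x. \<forall>i<n. x i \<in> carrier (R Quot PIdl u) \<Longrightarrow>
      Q.lin_comb n x (\<lambda>i. PIdl u +> a i) = \<zero>\<^bsub>R Quot PIdl u\<^esub> \<Longrightarrow>
      x \<in> Q.lin_span n m (\<lambda>j i. PIdl u +> S j i)"
    by (rule quot_syzygies_lift[OF a quot]) blast
  show ?thesis
  proof (rule syzygies_fg_cons_of_lifts[OF u a S t])
    fix r assume "syzygy R (Suc n) (case_nat u a) r"
    then show "\<exists>c w. (\<forall>j<m. c j \<in> carrier R) \<and> (\<forall>i<n. w i \<in> carrier R) \<and>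
        (\<forall>i<n. r (Suc i) = vec_mat m c S i \<oplus> w i \<otimes> u)"
      using cons_syzygy_tail_decomp[OF a S span] by blast
  qed
qed

lemma finitely_presented_via_quotient:
  fixes n :: nat
  assumes a: "\<forall>i<n. a i \<in> carrier R" and u: "u \<in> Idl (a ` {..<n})" "u \<noteq> \<zero>"
    and coherent: "coherent_ring (R Quot PIdl u)"
  shows "finitely_presented_ideal R (Idl (a ` {..<n}))"
proof -
  have u_carr: "u \<in> carrier R"
    using a u(1) genideal_ideal[of "a ` {..<n}"] by (auto intro: ideal.Icarr)
  interpret principal_quotient R u
    by unfold_locales (rule u_carr)
  have "Q.syzygies_fg n (\<lambda>i. PIdl u +> a i)"
    using coherent a by (intro Q.syzygies_fg_if_coherent) auto
  then have "syzygies_fg (Suc n) (case_nat u a)"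
    by (rule syzygies_fg_cons[OF a u_carr u(2)])
  moreover have "Idl (case_nat u a ` {..<Suc n}) = Idl (a ` {..<n})"
    using a u genideal_insert_mem[of "a ` {..<n}" u]
    by (simp add: lessThan_Suc_eq_insert_0 image_insert image_image image_subset_iff)
  moreover have "\<forall>i<Suc n. case_nat u a i \<in> carrier R"
    using a u_carr by (simp add: All_less_Suc2)
  ultimately show ?thesis
    unfolding finitely_presented_ideal_iff by metis
qed

lemma finitely_presented_if_quotients_coherent:
  assumes quot: "\<forall>u\<in>carrier R. u \<noteq> \<zero> \<and> u \<notin> Units R \<longrightarrow> coherent_ring (R Quot PIdl u)"
    and "finitely_generated_ideal R I"
  shows "finitely_presented_ideal R I"
proof -
  obtain n :: nat and a where a: "\<forall>i<n. a i \<in> carrier R" and I: "I = Idl (a ` {..<n})"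
    by (rule finitely_generated_ideal_lessThan[OF \<open>finitely_generated_ideal R I\<close>])
  have "ideal I R"
    using a unfolding I by (intro genideal_ideal) auto
  then have "\<zero> \<in> I"
    by (simp add: additive_subgroup.zero_closed ideal.axioms(1))
  show ?thesis
  proof (cases "I = {\<zero>}")
    case True
    then show ?thesis
      by (simp add: finitely_presented_zero_ideal)
  next
    case False
    then obtain u where u: "u \<in> I" "u \<noteq> \<zero>"
      using \<open>\<zero> \<in> I\<close> by blast
    show ?thesis
    proof (cases "u \<in> Units R")
      case True
      then show ?thesis
        using ideal_with_unit_eq_carrier[OF \<open>ideal I R\<close> u(1)] by (simp add: finitely_presented_unit_ideal)
    next
      case False
      then have "coherent_ring (R Quot PIdl u)"
        using quot u ideal.Icarr[OF \<open>ideal I R\<close>] by blast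
      then show ?thesis
        using finitely_presented_via_quotient[OF a _ u(2)] u(1) by (simp add: I)
    qed
  qed
qed

end

theorem lemma4p4:
  fixes R :: "('a, 'b) ring_scheme"
  assumes "domain R"
    and "\<forall>u\<in>carrier R. u \<noteq> \<zero>\<^bsub>R\<^esub> \<and> u \<notin> Units R \<longrightarrow> coherent_ring (R Quot (PIdl\<^bsub>R\<^esub> u))"
  shows "coherent_ring R"
  unfolding coherent_ring_def
  using domain.axioms(1)[OF assms(1)] domain.finitely_presented_if_quotients_coherent[OF assms]
  by blast

end
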